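(* Let $p\in(0,1)$ and $q=-\log(1-p)$. For rectangles $R\subseteq R'$ with $\dim(R)=(a,b)$ and $\dim(R')=(a+s,b+t)$, $$ \mathbb{P}_p\big[D(R,R')\big]\le \exp\Big(-s\,g(bq)-t\,g(aq)+2[g(bq)+g(aq)]+st\,q\,e^{2[g(bq)+g(aq)]}\Big). $$
   Context: Under $\mathbb{P}_p$, the initial configuration $\sigma$ assigns independent states to sites of $\mathbb{Z}^2$: the origin is active with probability $p$, else empty; every other site is occupied with probability $p$, else empty. A rectangle is $\{a,\dots,c\}\times\{b,\dots,d\}\subset\mathbb{Z}^2$ with dimensions $(c-a+1,d-b+1)$; columns are $\{x\}\times\{b,\dots,d\}$ and rows $\{a,\dots,c\}\times\{y\}$. A rectangle has a double gap in the columns (resp. rows) if two consecutive columns (resp. rows) consist entirely of empty sites in $\sigma$. For $R=\{x_1,\dots,x_2\}\times\{y_1,\dots,y_2\}\subseteq R'=\{X_1,\dots,X_2\}\times\{Y_1,\dots,Y_2\}$, $D(R,R')$ is the event that each of the (possibly empty) rectangles $\{X_1,\dots,x_1-1\}\times\{Y_1,\dots,Y_2\}$ and $\{x_2+1,\dots,X_2\}\times\{Y_1,\dots,Y_2\}$ has no double gap in the columns, and each of $\{X_1,\dots,X_2\}\times\{Y_1,\dots,y_1-1\}$ and $\{X_1,\dots,X_2\}\times\{y_2+1,\dots,Y_2\}$ has no double gap in the rows. Also $\beta(u)=\frac{u+\sqrt{u(4-3u)}}{2}$ and $g(z)=-\log\beta(1-e^{-z})$ for $z>0$. *)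

theory Defs
  imports "HOL-Probability.Probability"
begin

datatype site_state = Empty | Occupied | Active

type_synonym config = "int \<times> int \<Rightarrow> site_state"

definition site_law :: "real \<Rightarrow> int \<times> int \<Rightarrow> site_state measure" where
  "site_law p v = measure_pmf (map_pmf
     (\<lambda>b. if b then (if v = (0,0) then Active else Occupied) else Empty) (bernoulli_pmf p))"

definition P :: "real \<Rightarrow> config measure" where
  "P p = PiM (UNIV :: (int \<times> int) set) (site_law p)"

definition double_gap_cols :: "config \<Rightarrow> int \<Rightarrow> int \<Rightarrow> int \<Rightarrow> int \<Rightarrow> bool" where
  "double_gap_cols \<sigma> a c b d \<longleftrightarrow>
     (\<exists>x. a \<le> x \<and> x + 1 \<le> c \<and> (\<forall>y\<in>{b..d}. \<sigma> (x,y) = Empty \<and> \<sigma> (x+1,y) = Empty))"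

definition double_gap_rows :: "config \<Rightarrow> int \<Rightarrow> int \<Rightarrow> int \<Rightarrow> int \<Rightarrow> bool" where
  "double_gap_rows \<sigma> a c b d \<longleftrightarrow>
     (\<exists>y. b \<le> y \<and> y + 1 \<le> d \<and> (\<forall>x\<in>{a..c}. \<sigma> (x,y) = Empty \<and> \<sigma> (x,y+1) = Empty))"

text \<open>Event D(R,R') for R = {x1..x2} x {y1..y2} and R' = {X1..X2} x {Y1..Y2}.\<close>
definition D_event :: "int \<Rightarrow> int \<Rightarrow> int \<Rightarrow> int \<Rightarrow> int \<Rightarrow> int \<Rightarrow> int \<Rightarrow> int \<Rightarrow> config \<Rightarrow> bool" where
  "D_event x1 x2 y1 y2 X1 X2 Y1 Y2 \<sigma> \<longleftrightarrow>
     \<not> double_gap_cols \<sigma> X1 (x1 - 1) Y1 Y2 \<and>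
     \<not> double_gap_cols \<sigma> (x2 + 1) X2 Y1 Y2 \<and>
     \<not> double_gap_rows \<sigma> X1 X2 Y1 (y1 - 1) \<and>
     \<not> double_gap_rows \<sigma> X1 X2 (y2 + 1) Y2"

definition beta :: "real \<Rightarrow> real" where
  "beta u = (u + sqrt (u * (4 - 3 * u))) / 2"

definition g :: "real \<Rightarrow> real" where
  "g z = - ln (beta (1 - exp (- z)))"

end

theory Submission
  imports Defs
begin

text \<open>Cut \<open>R' - R\<close> into four corner rectangles and four arms, the strips beside the sides of
  \<open>R\<close>. Fix the corners. The left arm is a chain of \<open>s\<^sub>1\<close> columns of height \<open>b\<close>, each empty
  with probability \<open>1 - u = (1 - p)\<^sup>b\<close> independently, and the absence of a double gap forces
  that whenever two consecutive columns of \<open>R'\<close> have empty corner parts, their parts beside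
  \<open>R\<close> are not both empty. A transfer-matrix potential shows that each such constrained pair
  costs a factor \<open>beta u = exp (- g (b q))\<close>. A non-empty corner site spoils at most two pairs, so with \<open>Z\<close> occupied
  corner sites at least \<open>s - 2 - 2 Z\<close> column pairs and \<open>t - 2 - 2 Z\<close> row pairs are constrained.
  Integrating the resulting weight \<open>exp (2 (g (b q) + g (a q)) Z)\<close> over the \<open>s t\<close> independent
  corner sites gives the last term, via \<open>1 + p (c - 1) \<le> exp (q c)\<close>.\<close>

section \<open>Product measure on configurations\<close>

lemma UNIV_site_state: "(UNIV :: site_state set) = {Empty, Occupied, Active}"
  by (auto intro: site_state.exhaust)

lemma finite_UNIV_site_state [simp]: "finite (UNIV :: site_state set)"
  by (simp add: UNIV_site_state)

lemma sets_site_law [simp]: "sets (site_law p v) = UNIV"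
  and space_site_law [simp]: "space (site_law p v) = UNIV"
  by (simp_all add: site_law_def)

lemma prob_space_site_law: "prob_space (site_law p v)"
  by (simp add: site_law_def prob_space_measure_pmf)

lemma product_prob_space_site_law: "product_prob_space (site_law p)"
  unfolding product_prob_space_def product_prob_space_axioms_def product_sigma_finite_def
  using prob_space_site_law prob_space_imp_sigma_finite by blast

lemma prob_space_PiM_site_law: "prob_space (PiM I (site_law p))"
  by (rule prob_space_PiM) (rule prob_space_site_law)

lemma emeasure_site_law_Empty:
  assumes "0 \<le> p" "p \<le> 1"
  shows "emeasure (site_law p v) {Empty} = ennreal (1 - p)"
proof -
  have "(\<lambda>b. if b then (if v = (0,0) then Active else Occupied) else Empty) -` {Empty} = {False}"
    by auto
  then have "emeasure (site_law p v) {Empty} = emeasure (measure_pmf (bernoulli_pmf p)) {False}"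
    unfolding site_law_def by (simp only: emeasure_map_pmf)
  then show ?thesis
    using assms by (simp add: emeasure_pmf_single)
qed

lemma space_PiM_site_law: "space (PiM I (site_law p)) = PiE I (\<lambda>_. UNIV)"
  by (simp add: space_PiM)

lemma sets_PiM_site_law:
  assumes "finite I" "A \<subseteq> space (PiM I (site_law p))"
  shows "A \<in> sets (PiM I (site_law p))"
proof -
  have "finite A"
    using assms by (metis finite_PiE finite_UNIV_site_state finite_subset space_PiM_site_law)
  have "A = (\<Union>f\<in>A. PiE I (\<lambda>i. {f i}))"
  proof
    show "A \<subseteq> (\<Union>f\<in>A. PiE I (\<lambda>i. {f i}))"
      using assms(2) by (auto simp: space_PiM_site_law PiE_iff)
    show "(\<Union>f\<in>A. PiE I (\<lambda>i. {f i})) \<subseteq> A"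
    proof clarify
      fix f h assume f: "f \<in> A" and h: "h \<in> PiE I (\<lambda>i. {f i})"
      have "f \<in> PiE I (\<lambda>_. UNIV)"
        using f assms(2) by (auto simp: space_PiM_site_law)
      then have "h = f"
        using h by (auto simp: PiE_iff extensional_def fun_eq_iff)
      then show "h \<in> A" using f by simp
    qed
  qed
  also have "\<dots> \<in> sets (PiM I (site_law p))"
    using \<open>finite A\<close> assms(1) by (intro sets.finite_UN) (auto intro!: sets_PiM_I_finite)
  finally show ?thesis .
qed

lemma borel_measurable_PiM_site_law:
  "finite I \<Longrightarrow> f \<in> borel_measurable (PiM I (site_law p))"
  by (rule measurableI) (auto intro!: sets_PiM_site_law)

definition all_empty :: "(int \<times> int) set \<Rightarrow> config \<Rightarrow> bool" where
  "all_empty S \<sigma> \<longleftrightarrow> (\<forall>v\<in>S. \<sigma> v = Empty)"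

definition determined_by :: "(int \<times> int) set \<Rightarrow> (config \<Rightarrow> 'a) \<Rightarrow> bool" where
  "determined_by S f \<longleftrightarrow> (\<forall>\<sigma> \<sigma>'. (\<forall>v\<in>S. \<sigma> v = \<sigma>' v) \<longrightarrow> f \<sigma> = f \<sigma>')"

lemma determined_byD: "determined_by S f \<Longrightarrow> (\<And>v. v \<in> S \<Longrightarrow> \<sigma> v = \<sigma>' v) \<Longrightarrow> f \<sigma> = f \<sigma>'"
  by (simp add: determined_by_def)

lemma determined_by_subset: "determined_by S f \<Longrightarrow> S \<subseteq> T \<Longrightarrow> determined_by T f"
  by (auto simp: determined_by_def)

lemma determined_by_comp: "determined_by S f \<Longrightarrow> determined_by S (\<lambda>\<sigma>. h (f \<sigma>))"
  unfolding determined_by_def by metis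

lemma determined_by_comp2:
  "determined_by S f \<Longrightarrow> determined_by S f' \<Longrightarrow> determined_by S (\<lambda>\<sigma>. h (f \<sigma>) (f' \<sigma>))"
  unfolding determined_by_def by metis

lemma determined_by_all_empty: "determined_by S (all_empty S)"
  by (simp add: determined_by_def all_empty_def)

lemma determined_by_restrict: "determined_by S f \<Longrightarrow> f (restrict \<sigma> S) = f \<sigma>"
  by (rule determined_byD) auto

lemma determined_by_merge:
  "determined_by W f \<Longrightarrow> f (merge W U (w, x)) = f w"
  by (rule determined_byD) (auto simp: merge_def)

lemma determined_by_merge_right:
  "determined_by U f \<Longrightarrow> W \<inter> U = {} \<Longrightarrow> f (merge W U (w, x)) = f x"
  by (rule determined_byD) (auto simp: merge_def)

lemma nn_integral_PiM_site_law_Un_le: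
  assumes "finite W" "finite U" "W \<inter> U = {}"
    and "\<And>w. w \<in> space (PiM W (site_law p)) \<Longrightarrow>
       (\<integral>\<^sup>+x. F (merge W U (w, x)) \<partial>PiM U (site_law p)) \<le> C w"
  shows "(\<integral>\<^sup>+\<sigma>. F \<sigma> \<partial>PiM (W \<union> U) (site_law p)) \<le> (\<integral>\<^sup>+w. C w \<partial>PiM W (site_law p))"
proof -
  interpret product_prob_space "site_law p" by (rule product_prob_space_site_law)
  have "(\<integral>\<^sup>+\<sigma>. F \<sigma> \<partial>PiM (W \<union> U) (site_law p)) =
     (\<integral>\<^sup>+w. (\<integral>\<^sup>+x. F (merge W U (w, x)) \<partial>PiM U (site_law p)) \<partial>PiM W (site_law p))"
    using assms(1-3) by (intro product_nn_integral_fold) (auto intro: borel_measurable_PiM_site_law)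
  also have "\<dots> \<le> (\<integral>\<^sup>+w. C w \<partial>PiM W (site_law p))"
    using assms(4) by (intro nn_integral_mono) auto
  finally show ?thesis .
qed

lemma emeasure_all_empty:
  assumes "finite U" "0 \<le> p" "p \<le> 1"
  shows "emeasure (PiM U (site_law p)) {x \<in> space (PiM U (site_law p)). all_empty U x}
    = ennreal ((1 - p) ^ card U)"
proof -
  interpret product_prob_space "site_law p" by (rule product_prob_space_site_law)
  have "{x \<in> space (PiM U (site_law p)). all_empty U x} = PiE U (\<lambda>_. {Empty})"
    by (auto simp: space_PiM_site_law all_empty_def PiE_iff extensional_def)
  then have "emeasure (PiM U (site_law p)) {x \<in> space (PiM U (site_law p)). all_empty U x}
      = (\<Prod>i\<in>U. emeasure (site_law p i) {Empty})"
    using assms(1) by (simp only:) (rule emeasure_PiM, auto)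
  also have "\<dots> = ennreal ((1 - p) ^ card U)"
    using assms(2,3) by (simp add: emeasure_site_law_Empty prod_ennreal ennreal_power)
  finally show ?thesis .
qed

lemma nn_integral_if_all_empty:
  assumes "finite U" "0 \<le> p" "p \<le> 1" "0 \<le> c1" "0 \<le> c2"
  shows "(\<integral>\<^sup>+x. ennreal (if all_empty U x then c2 else c1) \<partial>PiM U (site_law p))
     = ennreal (c1 * (1 - (1 - p) ^ card U) + c2 * (1 - p) ^ card U)"
proof -
  let ?M = "PiM U (site_law p)"
  interpret prob_space ?M by (rule prob_space_PiM_site_law)
  define A where "A = {x \<in> space ?M. all_empty U x}"
  have A: "A \<in> sets ?M"
    unfolding A_def using assms(1) by (intro sets_PiM_site_law) auto
  have mA: "measure ?M A = (1 - p) ^ card U"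
    using emeasure_all_empty[OF assms(1-3)] assms(2,3) by (simp add: A_def emeasure_eq_measure)
  have "(\<integral>\<^sup>+x. ennreal (if all_empty U x then c2 else c1) \<partial>?M)
     = (\<integral>\<^sup>+x. ennreal c1 * indicator (space ?M - A) x + ennreal c2 * indicator A x \<partial>?M)"
    by (rule nn_integral_cong) (auto simp: A_def indicator_def)
  also have "\<dots> = ennreal c1 * emeasure ?M (space ?M - A) + ennreal c2 * emeasure ?M A"
    using A by (subst nn_integral_add) (auto simp: nn_integral_cmult_indicator)
  also have "\<dots> = ennreal (c1 * (1 - (1 - p) ^ card U) + c2 * (1 - p) ^ card U)"
    using mA prob_compl[OF A] assms(2-5)
    by (simp add: emeasure_eq_measure ennreal_mult ennreal_plus[symmetric] power_le_one)
  finally show ?thesis .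
qed


lemma emeasure_P_eq_PiM:
  assumes "finite J" "determined_by J E"
  shows "emeasure (P p) {\<sigma> \<in> space (P p). E \<sigma>}
    = emeasure (PiM J (site_law p)) {\<sigma> \<in> space (PiM J (site_law p)). E \<sigma>}"
proof -
  interpret product_prob_space "site_law p" "UNIV :: (int \<times> int) set"
    by (rule product_prob_space_site_law)
  have "{\<sigma> \<in> space (P p). E \<sigma>}
      = prod_emb UNIV (site_law p) J {\<sigma> \<in> space (PiM J (site_law p)). E \<sigma>}"
    using determined_by_restrict[OF assms(2)]
    by (auto simp: P_def prod_emb_def space_PiM_site_law)
  then show ?thesis
    unfolding P_def using assms(1)
    by (simp add: emeasure_PiM_emb' sets_PiM_site_law)
qed


section \<open>Chains of blocks\<close>

lemma beta_pos: "0 < u \<Longrightarrow> u \<le> 1 \<Longrightarrow> 0 < beta u"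
  by (simp add: beta_def add_pos_nonneg)

lemma beta_le_one:
  assumes "0 < u" "u \<le> 1"
  shows "beta u \<le> 1"
proof -
  have "(2 - u)\<^sup>2 - u * (4 - 3 * u) = 4 * (1 - u)\<^sup>2"
    by (simp add: power2_eq_square algebra_simps)
  then have "u * (4 - 3 * u) \<le> (2 - u)\<^sup>2"
    by (smt (verit) zero_le_power2)
  then have "sqrt (u * (4 - 3 * u)) \<le> 2 - u"
    using assms by (intro real_le_lsqrt) auto
  then show ?thesis by (simp add: beta_def)
qed

text \<open>\<open>beta u\<close> is the positive root of \<open>x\<^sup>2 = u x + u (1 - u)\<close>, i.e. the Perron eigenvalue of
  the transfer matrix of a chain of blocks, each non-empty with probability \<open>u\<close>, in which two
  consecutive empty blocks are forbidden.\<close>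
lemma beta_fixed_point:
  assumes "0 < u" "u \<le> 1"
  shows "u + (1 - u) * (u / beta u) = beta u"
proof -
  define S where "S = sqrt (u * (4 - 3 * u))"
  have "S\<^sup>2 = u * (4 - 3 * u)"
    using assms by (simp add: S_def)
  then have "(beta u)\<^sup>2 = u * beta u + u * (1 - u)"
    unfolding beta_def S_def[symmetric] by (simp add: power2_eq_square field_simps)
  then show ?thesis
    using beta_pos[OF assms] by (simp add: field_simps power2_eq_square)
qed

lemma nonempty_block_prob_bounds:
  fixes p :: real
  assumes "0 < p" "p < 1" "0 < m"
  shows "0 < 1 - (1 - p) ^ m" "1 - (1 - p) ^ m \<le> 1"
proof -
  have "(1 - p) ^ m < 1"
    using assms by (subst power_less_one_iff) auto
  then show "0 < 1 - (1 - p) ^ m" by simp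
  show "1 - (1 - p) ^ m \<le> 1"
    using assms by simp
qed

lemma beta_nonempty_block_prob:
  fixes p :: real
  assumes "0 < p" "p < 1" "0 < m"
  shows "beta (1 - (1 - p) ^ m) = exp (- g (real m * - ln (1 - p)))"
proof -
  have "exp (- (real m * - ln (1 - p))) = (1 - p) ^ m"
    using assms by (simp add: exp_of_nat_mult)
  then show ?thesis
    using beta_pos[OF nonempty_block_prob_bounds[OF assms]] by (simp add: g_def)
qed


definition block_family :: "nat \<Rightarrow> (nat \<Rightarrow> (int \<times> int) set) \<Rightarrow> bool" where
  "block_family m U \<longleftrightarrow> (\<forall>c. finite (U c) \<and> card (U c) = m) \<and> (\<forall>c c'. c \<noteq> c' \<longrightarrow> U c \<inter> U c' = {})"

lemma block_familyD:
  assumes "block_family m U"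
  shows "finite (U c)" "card (U c) = m" "c \<noteq> c' \<Longrightarrow> U c \<inter> U c' = {}"
  using assms by (auto simp: block_family_def)

lemma block_family_disjoint_UN:
  assumes "block_family m U" "n \<notin> A"
  shows "(\<Union>c\<in>A. U c) \<inter> U n = {}"
proof -
  have "U c \<inter> U n = {}" if "c \<in> A" for c
    using block_familyD(3)[OF assms(1), of c n] assms(2) that by auto
  then show ?thesis by blast
qed

definition no_double_gap_at :: "(nat \<Rightarrow> (int \<times> int) set) \<Rightarrow> nat set \<Rightarrow> nat \<Rightarrow> config \<Rightarrow> bool" where
  "no_double_gap_at U K n \<sigma> \<longleftrightarrow>
     (\<forall>c\<in>K. Suc c < n \<longrightarrow> \<not> (all_empty (U c) \<sigma> \<and> all_empty (U (Suc c)) \<sigma>))"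

lemma no_double_gap_at_Suc:
  "no_double_gap_at U K (Suc n) \<sigma> \<longleftrightarrow> no_double_gap_at U K n \<sigma> \<and>
     \<not> (n \<noteq> 0 \<and> n - 1 \<in> K \<and> all_empty (U (n - 1)) \<sigma> \<and> all_empty (U n) \<sigma>)"
  unfolding no_double_gap_at_def by (cases n) (auto simp: less_Suc_eq)

lemma determined_by_all_empty_block:
  "c < n \<Longrightarrow> determined_by (\<Union>c<n. U c) (all_empty (U c))"
  by (rule determined_by_subset[OF determined_by_all_empty]) auto

lemma determined_by_no_double_gap_at:
  "determined_by (\<Union>c<n. U c) (no_double_gap_at U K n)"
  unfolding determined_by_def no_double_gap_at_def
  using determined_by_all_empty_block[THEN determined_byD] by (metis Suc_lessD)

text \<open>The potential weighs a configuration of the first \<open>n\<close> blocks by \<open>u / beta u\<close> when the last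
  block is empty and still has to be followed by a non-empty one.\<close>
definition chain_potential :: "real \<Rightarrow> (nat \<Rightarrow> (int \<times> int) set) \<Rightarrow> nat set \<Rightarrow> nat \<Rightarrow> config \<Rightarrow> real" where
  "chain_potential u U K n \<sigma> =
     (if no_double_gap_at U K n \<sigma>
      then (if n \<noteq> 0 \<and> n - 1 \<in> K \<and> all_empty (U (n - 1)) \<sigma> then u / beta u else 1) else 0)"

lemma chain_potential_nonneg: "0 < u \<Longrightarrow> u \<le> 1 \<Longrightarrow> 0 \<le> chain_potential u U K n \<sigma>"
  using beta_pos[of u] by (simp add: chain_potential_def)

lemma nn_integral_chain_potential_Suc_le:
  assumes U: "block_family m U" "0 < m" and p: "0 < p" "p < 1"
    and W: "W = (\<Union>c<n. U c)"
  defines "u \<equiv> 1 - (1 - p) ^ m"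
  shows "(\<integral>\<^sup>+x. ennreal (chain_potential u U K (Suc n) (merge W (U n) (w, x))) \<partial>PiM (U n) (site_law p))
    \<le> ennreal ((if n \<in> K then beta u else 1) * chain_potential u U K n w)"
proof -
  have u: "0 < u" "u \<le> 1"
    using nonempty_block_prob_bounds[OF p U(2)] by (simp_all add: u_def)
  note b = beta_pos[OF u] beta_le_one[OF u] beta_fixed_point[OF u]
  have disj: "W \<inter> U n = {}"
    using block_family_disjoint_UN[OF U(1)] by (simp add: W)
  define A where "A \<longleftrightarrow> n \<noteq> 0 \<and> n - 1 \<in> K \<and> all_empty (U (n - 1)) w"
  define E where "E \<longleftrightarrow> no_double_gap_at U K n w"
  define c1 where "c1 = (if E then 1 else (0::real))"
  define c2 where "c2 = (if E \<and> \<not> A then (if n \<in> K then u / beta u else 1) else (0::real))"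
  have merge: "chain_potential u U K (Suc n) (merge W (U n) (w, x))
      = (if all_empty (U n) x then c2 else c1)" for x
  proof -
    let ?\<sigma> = "merge W (U n) (w, x)"
    have "all_empty (U c) ?\<sigma> = all_empty (U c) w" if "c < n" for c
      using determined_by_merge[OF determined_by_all_empty_block[OF that]] by (simp add: W)
    moreover have "no_double_gap_at U K n ?\<sigma> = E"
      using determined_by_merge[OF determined_by_no_double_gap_at] by (simp add: W E_def)
    moreover have "all_empty (U n) ?\<sigma> = all_empty (U n) x"
      by (rule determined_by_merge_right[OF determined_by_all_empty disj])
    ultimately show ?thesis
      by (auto simp: chain_potential_def no_double_gap_at_Suc c1_def c2_def A_def)
  qed
  have "(\<integral>\<^sup>+x. ennreal (chain_potential u U K (Suc n) (merge W (U n) (w, x))) \<partial>PiM (U n) (site_law p))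
     = ennreal (c1 * u + c2 * (1 - u))"
    unfolding merge using p u b block_familyD(1,2)[OF U(1)]
    by (subst nn_integral_if_all_empty) (auto simp: c1_def c2_def u_def)
  also have "\<dots> \<le> ennreal ((if n \<in> K then beta u else 1) * chain_potential u U K n w)"
  proof (intro ennreal_leI)
    have "chain_potential u U K n w = (if E then (if A then u / beta u else 1) else 0)"
      by (simp add: chain_potential_def E_def A_def)
    moreover have "u \<le> u / beta u"
      using u b by (simp add: le_divide_eq mult_left_le)
    ultimately show "c1 * u + c2 * (1 - u) \<le> (if n \<in> K then beta u else 1) * chain_potential u U K n w"
      using u b by (cases E; cases A; cases "n \<in> K") (simp_all add: c1_def c2_def mult.commute)
  qed
  finally show ?thesis .
qed


lemma nn_integral_chain_potential_le:
  assumes U: "block_family m U" "0 < m" and p: "0 < p" "p < 1"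
  defines "u \<equiv> 1 - (1 - p) ^ m"
  shows "(\<integral>\<^sup>+\<sigma>. ennreal (chain_potential u U K n \<sigma>) \<partial>PiM (\<Union>c<n. U c) (site_law p))
    \<le> ennreal (beta u ^ card (K \<inter> {..<n}))"
proof (induction n)
  case 0
  interpret prob_space "PiM {} (site_law p)" by (rule prob_space_PiM_site_law)
  show ?case by (simp add: chain_potential_def no_double_gap_at_def emeasure_space_1)
next
  case (Suc n)
  have u: "0 < u" "u \<le> 1"
    using nonempty_block_prob_bounds[OF p U(2)] by (simp_all add: u_def)
  let ?W = "\<Union>c<n. U c" and ?k = "if n \<in> K then beta u else 1"
  have "(\<integral>\<^sup>+\<sigma>. ennreal (chain_potential u U K (Suc n) \<sigma>) \<partial>PiM (?W \<union> U n) (site_law p))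
      \<le> (\<integral>\<^sup>+w. ennreal (?k * chain_potential u U K n w) \<partial>PiM ?W (site_law p))"
  proof (rule nn_integral_PiM_site_law_Un_le)
    show "finite ?W" "finite (U n)" "?W \<inter> U n = {}"
      using block_familyD(1)[OF U(1)] block_family_disjoint_UN[OF U(1)] by auto
    show "(\<integral>\<^sup>+x. ennreal (chain_potential u U K (Suc n) (merge ?W (U n) (w, x))) \<partial>PiM (U n) (site_law p))
        \<le> ennreal (?k * chain_potential u U K n w)" for w
      unfolding u_def by (rule nn_integral_chain_potential_Suc_le[OF U p refl])
  qed
  also have "\<dots> = ennreal ?k * (\<integral>\<^sup>+w. ennreal (chain_potential u U K n w) \<partial>PiM ?W (site_law p))"
    using u beta_pos[OF u] chain_potential_nonneg[OF u] block_familyD(1)[OF U(1)]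
    by (subst nn_integral_cmult[symmetric])
      (auto intro: borel_measurable_PiM_site_law simp: ennreal_mult)
  also have "\<dots> \<le> ennreal ?k * ennreal (beta u ^ card (K \<inter> {..<n}))"
    by (intro mult_left_mono Suc.IH) simp
  also have "\<dots> = ennreal (beta u ^ card (K \<inter> {..<Suc n}))"
  proof -
    have "K \<inter> {..<Suc n} = (if n \<in> K then insert n (K \<inter> {..<n}) else K \<inter> {..<n})"
      by (auto simp: lessThan_Suc)
    then show ?thesis
      using beta_pos[OF u] by (auto simp: ennreal_mult[symmetric])
  qed
  finally show ?case
    by (simp add: lessThan_Suc Un_commute)
qed

lemma nn_integral_no_double_gap_at_le:
  assumes "block_family m U" "0 < m" "0 < p" "p < 1"
  shows "(\<integral>\<^sup>+\<sigma>. ennreal (of_bool (no_double_gap_at U K n \<sigma>)) \<partial>PiM (\<Union>c<n. U c) (site_law p))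
    \<le> ennreal (beta (1 - (1 - p) ^ m) ^ card (K \<inter> {c. Suc c < n}))"
proof -
  define K' where "K' = K \<inter> {c. Suc c < n}"
  have "of_bool (no_double_gap_at U K n \<sigma>) = chain_potential (1 - (1 - p) ^ m) U K' n \<sigma>" for \<sigma>
    by (auto simp: chain_potential_def no_double_gap_at_def K'_def)
  moreover have "K' \<inter> {..<n} = K'"
    by (auto simp: K'_def)
  ultimately show ?thesis
    using nn_integral_chain_potential_le[OF assms, where K=K' and n=n] by (simp only: K'_def)
qed

section \<open>Arms\<close>

text \<open>An arm is one of the four strips of \<open>R' - R\<close> that lie beside a side of \<open>R\<close>, read column by
  column (or row by row): its \<open>c\<close>-th column, a full column of \<open>R'\<close>, splits into the block
  \<open>arm_blocks A c\<close> beside \<open>R\<close>, of \<open>arm_width A\<close> sites, and the part \<open>arm_corner A c\<close> lying in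
  the corners of \<open>R'\<close>.\<close>
datatype arm = Arm
  (arm_width: nat) (arm_blocks: "nat \<Rightarrow> (int \<times> int) set") (arm_corner: "nat \<Rightarrow> (int \<times> int) set")
  (arm_length: nat)

definition proper_arm :: "arm \<Rightarrow> bool" where
  "proper_arm A \<longleftrightarrow> 0 < arm_width A \<and> block_family (arm_width A) (arm_blocks A)"

definition arm_region :: "arm \<Rightarrow> (int \<times> int) set" where
  "arm_region A = (\<Union>c<arm_length A. arm_blocks A c)"

definition arm_corner_region :: "arm \<Rightarrow> (int \<times> int) set" where
  "arm_corner_region A = (\<Union>c<arm_length A. arm_corner A c)"

definition corner_gaps :: "arm \<Rightarrow> config \<Rightarrow> nat set" where
  "corner_gaps A \<sigma> = {c. Suc c < arm_length A \<and>
     all_empty (arm_corner A c) \<sigma> \<and> all_empty (arm_corner A (Suc c)) \<sigma>}"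

definition arm_event :: "arm \<Rightarrow> config \<Rightarrow> bool" where
  "arm_event A \<sigma> \<longleftrightarrow> no_double_gap_at (arm_blocks A) (corner_gaps A \<sigma>) (arm_length A) \<sigma>"

definition arm_weight :: "real \<Rightarrow> arm \<Rightarrow> config \<Rightarrow> real" where
  "arm_weight p A \<sigma> = beta (1 - (1 - p) ^ arm_width A) ^ card (corner_gaps A \<sigma>)"

lemma arm_weight_nonneg: "proper_arm A \<Longrightarrow> 0 < p \<Longrightarrow> p < 1 \<Longrightarrow> 0 \<le> arm_weight p A \<sigma>"
  using beta_pos[OF nonempty_block_prob_bounds] by (simp add: arm_weight_def proper_arm_def less_imp_le)

lemma finite_arm_region: "proper_arm A \<Longrightarrow> finite (arm_region A)"
  by (auto simp: proper_arm_def arm_region_def block_family_def)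

lemma determined_by_corner_gaps: "determined_by (arm_corner_region A) (corner_gaps A)"
  unfolding determined_by_def
proof (intro allI impI)
  fix \<sigma> \<sigma>' :: config
  assume eq: "\<forall>v\<in>arm_corner_region A. \<sigma> v = \<sigma>' v"
  have "all_empty (arm_corner A c) \<sigma> = all_empty (arm_corner A c) \<sigma>'" if "c < arm_length A" for c
    using eq that unfolding all_empty_def arm_corner_region_def by (metis UN_I lessThan_iff)
  then show "corner_gaps A \<sigma> = corner_gaps A \<sigma>'"
    unfolding corner_gaps_def using Suc_lessD by blast
qed

lemma determined_by_arm_weight: "determined_by (arm_corner_region A) (arm_weight p A)"
  unfolding arm_weight_def by (rule determined_by_comp[OF determined_by_corner_gaps])

lemma determined_by_arm_event: "determined_by (arm_region A \<union> arm_corner_region A) (arm_event A)"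
  unfolding determined_by_def
proof (intro allI impI)
  fix \<sigma> \<sigma>' :: config
  assume eq: "\<forall>v\<in>arm_region A \<union> arm_corner_region A. \<sigma> v = \<sigma>' v"
  then have "corner_gaps A \<sigma> = corner_gaps A \<sigma>'"
    using determined_by_corner_gaps unfolding determined_by_def by blast
  moreover have "no_double_gap_at (arm_blocks A) K (arm_length A) \<sigma>
      = no_double_gap_at (arm_blocks A) K (arm_length A) \<sigma>'" for K
    using eq determined_by_no_double_gap_at
    unfolding determined_by_def arm_region_def by blast
  ultimately show "arm_event A \<sigma> = arm_event A \<sigma>'"
    by (simp add: arm_event_def)
qed

lemma determined_by_prod_list:
  "(\<And>x. x \<in> set xs \<Longrightarrow> determined_by S (f x)) \<Longrightarrow> determined_by S (\<lambda>\<sigma>. \<Prod>x\<leftarrow>xs. f x \<sigma>)"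
proof (induction xs)
  case Nil
  then show ?case by (simp add: determined_by_def)
next
  case (Cons x xs)
  then have "determined_by S (f x)" "determined_by S (\<lambda>\<sigma>. \<Prod>x\<leftarrow>xs. f x \<sigma>)"
    by auto
  from determined_by_comp2[where h = "(*)", OF this] show ?case
    by simp
qed

lemma determined_by_prod_arm_events:
  assumes "\<And>A. A \<in> set As \<Longrightarrow> arm_region A \<union> arm_corner_region A \<subseteq> S"
  shows "determined_by S (\<lambda>\<sigma>. \<Prod>A\<leftarrow>As. of_bool (arm_event A \<sigma>) :: real)"
proof (rule determined_by_prod_list)
  fix A assume "A \<in> set As"
  with determined_by_subset[OF determined_by_arm_event assms]
  show "determined_by S (\<lambda>\<sigma>. of_bool (arm_event A \<sigma>) :: real)"
    by (blast intro: determined_by_comp)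
qed

text \<open>Conditionally on the corners, the event of an arm only constrains the consecutive pairs of
  blocks beside empty corner pairs, so the chain bound integrates the arm out.\<close>
lemma nn_integral_arm_event_le:
  assumes A: "proper_arm A" and p: "0 < p" "p < 1"
    and W: "finite W" "W \<inter> arm_region A = {}" "arm_corner_region A \<subseteq> W"
    and R: "determined_by W R" "\<And>\<sigma>. 0 \<le> R \<sigma>"
  shows "(\<integral>\<^sup>+\<sigma>. ennreal (of_bool (arm_event A \<sigma>) * R \<sigma>) \<partial>PiM (W \<union> arm_region A) (site_law p))
    \<le> (\<integral>\<^sup>+w. ennreal (arm_weight p A w * R w) \<partial>PiM W (site_law p))"
proof (rule nn_integral_PiM_site_law_Un_le[OF W(1) finite_arm_region[OF A] W(2)])
  fix w :: config
  let ?\<sigma> = "\<lambda>x. merge W (arm_region A) (w, x)"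
  let ?K = "corner_gaps A w"
  have K: "corner_gaps A (?\<sigma> x) = ?K" for x
    using determined_by_merge[OF determined_by_subset[OF determined_by_corner_gaps W(3)]] .
  have ev: "arm_event A (?\<sigma> x) = no_double_gap_at (arm_blocks A) ?K (arm_length A) x" for x
    unfolding arm_event_def K using W(2) unfolding arm_region_def
    by (rule determined_by_merge_right[OF determined_by_no_double_gap_at])
  have "(\<integral>\<^sup>+x. ennreal (of_bool (arm_event A (?\<sigma> x)) * R (?\<sigma> x)) \<partial>PiM (arm_region A) (site_law p))
     = ennreal (R w) * (\<integral>\<^sup>+x. ennreal (of_bool (no_double_gap_at (arm_blocks A) ?K (arm_length A) x))
         \<partial>PiM (arm_region A) (site_law p))"
  proof -
    have "ennreal (of_bool (arm_event A (?\<sigma> x)) * R (?\<sigma> x))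
        = ennreal (R w) * ennreal (of_bool (no_double_gap_at (arm_blocks A) ?K (arm_length A) x))" for x
      unfolding ev determined_by_merge[OF R(1)] by (simp add: of_bool_def)
    then show ?thesis
      using finite_arm_region[OF A]
      by (simp add: nn_integral_cmult borel_measurable_PiM_site_law)
  qed
  also have "\<dots> \<le> ennreal (R w) * ennreal (beta (1 - (1 - p) ^ arm_width A) ^ card (?K \<inter> {c. Suc c < arm_length A}))"
    using A p unfolding arm_region_def proper_arm_def
    by (intro mult_left_mono nn_integral_no_double_gap_at_le) simp_all
  also have "\<dots> = ennreal (arm_weight p A w * R w)"
  proof -
    have "?K \<inter> {c. Suc c < arm_length A} = ?K"
      by (auto simp: corner_gaps_def)
    then show ?thesis
      using R(2) by (simp add: arm_weight_def ennreal_mult'[symmetric] mult.commute)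
  qed
  finally show "(\<integral>\<^sup>+x. ennreal (of_bool (arm_event A (?\<sigma> x)) * R (?\<sigma> x)) \<partial>PiM (arm_region A) (site_law p))
      \<le> ennreal (arm_weight p A w * R w)" .
qed


lemma nn_integral_arms_le:
  assumes p: "0 < p" "p < 1" and W: "finite W"
    and arms: "\<And>A. A \<in> set As \<Longrightarrow>
      proper_arm A \<and> W \<inter> arm_region A = {} \<and> arm_corner_region A \<subseteq> W"
    and disj: "sorted_wrt (\<lambda>A B. arm_region A \<inter> arm_region B = {}) As"
    and F: "determined_by W F" "\<And>\<sigma>. 0 \<le> F \<sigma>"
  shows "(\<integral>\<^sup>+\<sigma>. ennreal (F \<sigma> * (\<Prod>A\<leftarrow>As. of_bool (arm_event A \<sigma>)))
      \<partial>PiM (W \<union> (\<Union>A\<in>set As. arm_region A)) (site_law p))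
    \<le> (\<integral>\<^sup>+w. ennreal (F w * (\<Prod>A\<leftarrow>As. arm_weight p A w)) \<partial>PiM W (site_law p))"
  using arms disj F
proof (induction As arbitrary: F)
  case Nil
  then show ?case by simp
next
  case (Cons A As)
  let ?W = "W \<union> (\<Union>B\<in>set As. arm_region B)"
  let ?R = "\<lambda>\<sigma>. F \<sigma> * (\<Prod>B\<leftarrow>As. of_bool (arm_event B \<sigma>))"
  have A: "proper_arm A" "W \<inter> arm_region A = {}" "arm_corner_region A \<subseteq> W"
    using Cons.prems(1) by auto
  have "determined_by ?W (\<lambda>\<sigma>. \<Prod>B\<leftarrow>As. of_bool (arm_event B \<sigma>) :: real)"
    by (rule determined_by_prod_arm_events) (use Cons.prems(1) in auto)
  then have R: "determined_by ?W ?R"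
    by (rule determined_by_comp2[where h = "(*)", OF determined_by_subset[OF Cons.prems(3) Un_upper1]])
  have "(\<integral>\<^sup>+\<sigma>. ennreal (F \<sigma> * (\<Prod>B\<leftarrow>A # As. of_bool (arm_event B \<sigma>)))
      \<partial>PiM (W \<union> (\<Union>B\<in>set (A # As). arm_region B)) (site_law p))
    = (\<integral>\<^sup>+\<sigma>. ennreal (of_bool (arm_event A \<sigma>) * ?R \<sigma>) \<partial>PiM (?W \<union> arm_region A) (site_law p))"
    by (simp add: ac_simps Un_ac)
  also have "\<dots> \<le> (\<integral>\<^sup>+w. ennreal (arm_weight p A w * ?R w) \<partial>PiM ?W (site_law p))"
  proof (rule nn_integral_arm_event_le[OF A(1) p _ _ _ R])
    show "finite ?W"
      using W Cons.prems(1) finite_arm_region by auto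
    show "?W \<inter> arm_region A = {}"
      using A(2) Cons.prems(2) by (auto simp: Int_commute)
    show "arm_corner_region A \<subseteq> ?W"
      using A(3) by auto
    show "0 \<le> ?R \<sigma>" for \<sigma>
      using Cons.prems(4) by (auto intro!: mult_nonneg_nonneg prod_list_nonneg)
  qed
  also have "\<dots> = (\<integral>\<^sup>+w. ennreal ((F w * arm_weight p A w) * (\<Prod>B\<leftarrow>As. of_bool (arm_event B w)))
      \<partial>PiM ?W (site_law p))"
    by (simp add: ac_simps)
  also have "\<dots> \<le> (\<integral>\<^sup>+w. ennreal ((F w * arm_weight p A w) * (\<Prod>B\<leftarrow>As. arm_weight p B w))
      \<partial>PiM W (site_law p))"
  proof (rule Cons.IH)
    show "determined_by W (\<lambda>w. F w * arm_weight p A w)"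
      using Cons.prems(3) determined_by_subset[OF determined_by_arm_weight A(3)]
      by (rule determined_by_comp2[where h = "(*)"])
    show "0 \<le> F w * arm_weight p A w" for w
      using Cons.prems(4) arm_weight_nonneg[OF A(1) p] by simp
  qed (use Cons.prems(1,2) in simp_all)
  finally show ?case
    by (simp add: ac_simps)
qed


text \<open>Every consecutive pair of corner parts is either a gap pair or contains a non-empty part,
  and each non-empty part lies in at most two pairs.\<close>
lemma card_corner_gaps_ge:
  "arm_length A - 1 \<le> card (corner_gaps A \<sigma>)
     + 2 * card {c. c < arm_length A \<and> \<not> all_empty (arm_corner A c) \<sigma>}"
proof -
  let ?n = "arm_length A" and ?K = "corner_gaps A \<sigma>"
  let ?B = "{c. c < ?n \<and> \<not> all_empty (arm_corner A c) \<sigma>}"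
  have "{..<?n - 1} \<subseteq> ?K \<union> ?B \<union> (\<lambda>c. c - 1) ` ?B"
  proof
    fix c assume c: "c \<in> {..<?n - 1}"
    show "c \<in> ?K \<union> ?B \<union> (\<lambda>c. c - 1) ` ?B"
    proof (cases "all_empty (arm_corner A c) \<sigma> \<and> all_empty (arm_corner A (Suc c)) \<sigma>")
      case True
      then show ?thesis using c by (auto simp: corner_gaps_def)
    next
      case False
      then have "c \<in> ?B \<or> Suc c \<in> ?B" using c by auto
      moreover have "c = Suc c - 1" by simp
      ultimately show ?thesis by blast
    qed
  qed
  moreover have "finite ?K" "finite ?B"
    by (auto intro: finite_subset[of _ "{..<?n}"] simp: corner_gaps_def)
  ultimately have "card {..<?n - 1} \<le> card (?K \<union> ?B \<union> (\<lambda>c. c - 1) ` ?B)"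
    by (intro card_mono) simp_all
  then have "?n - 1 \<le> card (?K \<union> ?B \<union> (\<lambda>c. c - 1) ` ?B)"
    by simp
  also have "\<dots> \<le> card ?K + card ?B + card ((\<lambda>c. c - 1) ` ?B)"
    by (meson add_le_mono card_Un_le le_refl order_trans)
  also have "\<dots> \<le> card ?K + 2 * card ?B"
    using card_image_le[of ?B "\<lambda>c. c - 1"] by simp
  finally show ?thesis .
qed

section \<open>Occupied sites\<close>

definition occupied_count :: "(int \<times> int) set \<Rightarrow> config \<Rightarrow> nat" where
  "occupied_count S \<sigma> = card {v \<in> S. \<sigma> v \<noteq> Empty}"

lemma occupied_count_Un:
  "finite S \<Longrightarrow> finite T \<Longrightarrow> S \<inter> T = {} \<Longrightarrow>
    occupied_count (S \<union> T) \<sigma> = occupied_count S \<sigma> + occupied_count T \<sigma>"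
  unfolding occupied_count_def by (subst card_Un_disjoint[symmetric]) (auto intro: arg_cong[where f = card])

lemma nn_integral_site_law_occupied:
  assumes "0 \<le> p" "p \<le> 1" "0 \<le> c"
  shows "(\<integral>\<^sup>+st. ennreal (if st \<noteq> Empty then c else 1) \<partial>site_law p v) = ennreal (1 - p + p * c)"
proof -
  let ?M = "site_law p v"
  interpret prob_space ?M by (rule prob_space_site_law)
  have mE: "measure ?M {Empty} = 1 - p"
    using emeasure_site_law_Empty[OF assms(1,2), of v] assms by (simp add: emeasure_eq_measure)
  have "(\<integral>\<^sup>+st. ennreal (if st \<noteq> Empty then c else 1) \<partial>?M)
     = (\<integral>\<^sup>+st. ennreal 1 * indicator {Empty} st + ennreal c * indicator (space ?M - {Empty}) st \<partial>?M)"
    by (rule nn_integral_cong) (auto simp: indicator_def)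
  also have "\<dots> = ennreal 1 * emeasure ?M {Empty} + ennreal c * emeasure ?M (space ?M - {Empty})"
    by (subst nn_integral_add) (auto simp: nn_integral_cmult_indicator measurableI)
  also have "\<dots> = ennreal (1 - p + p * c)"
    using mE prob_compl[of "{Empty}"] assms
    by (simp add: emeasure_eq_measure ennreal_mult ennreal_plus[symmetric] mult.commute)
  finally show ?thesis .
qed

lemma nn_integral_power_occupied_count:
  assumes "finite S" "0 \<le> p" "p \<le> 1" "0 \<le> c"
  shows "(\<integral>\<^sup>+\<sigma>. ennreal (c ^ occupied_count S \<sigma>) \<partial>PiM S (site_law p))
     = ennreal ((1 - p + p * c) ^ card S)"
proof -
  interpret product_prob_space "site_law p" by (rule product_prob_space_site_law)
  have "ennreal (c ^ occupied_count S \<sigma>) = (\<Prod>v\<in>S. ennreal (if \<sigma> v \<noteq> Empty then c else 1))" for \<sigma>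
    using assms(1,4) by (simp add: occupied_count_def prod.If_cases Int_def prod_ennreal)
  then have "(\<integral>\<^sup>+\<sigma>. ennreal (c ^ occupied_count S \<sigma>) \<partial>PiM S (site_law p))
     = (\<integral>\<^sup>+\<sigma>. (\<Prod>v\<in>S. ennreal (if \<sigma> v \<noteq> Empty then c else 1)) \<partial>PiM S (site_law p))"
    by (simp only:)
  also have "\<dots> = (\<Prod>v\<in>S. (\<integral>\<^sup>+st. ennreal (if st \<noteq> Empty then c else 1) \<partial>site_law p v))"
    by (rule product_nn_integral_prod[OF assms(1)]) (auto intro: measurableI)
  also have "\<dots> = ennreal ((1 - p + p * c) ^ card S)"
    using assms(2-4) by (simp add: nn_integral_site_law_occupied ennreal_power del: ennreal_plus)
  finally show ?thesis .
qed

lemma binomial_moment_le_exp: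
  fixes p c :: real
  assumes "0 < p" "p < 1" "0 \<le> c"
  shows "(1 - p + p * c) ^ n \<le> exp (real n * - ln (1 - p) * c)"
proof -
  have "p \<le> - ln (1 - p)"
    using ln_le_minus_one[of "1 - p"] assms by simp
  then have "p * (c - 1) \<le> - ln (1 - p) * c"
    using assms by (smt (verit) mult_right_mono mult_left_mono)
  have "(1 - p + p * c) ^ n \<le> exp (p * (c - 1)) ^ n"
    using exp_ge_add_one_self[of "p * (c - 1)"] assms
    by (intro power_mono) (auto simp: algebra_simps intro: add_increasing2)
  also have "\<dots> \<le> exp (- ln (1 - p) * c) ^ n"
    using \<open>p * (c - 1) \<le> - ln (1 - p) * c\<close> by (intro power_mono) auto
  finally show ?thesis
    by (simp add: exp_of_nat_mult[symmetric] mult.assoc)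
qed

lemma card_nonempty_blocks_le:
  assumes "block_family k C"
  shows "card {c. c < n \<and> \<not> all_empty (C c) \<sigma>} \<le> occupied_count (\<Union>c<n. C c) \<sigma>"
proof -
  let ?S = "{v \<in> (\<Union>c<n. C c). \<sigma> v \<noteq> Empty}"
  define block where "block v = (THE c. v \<in> C c)" for v
  have block: "block v = c" if "v \<in> C c" for v c
    unfolding block_def using block_familyD(3)[OF assms] that by blast
  have "{c. c < n \<and> \<not> all_empty (C c) \<sigma>} \<subseteq> block ` ?S"
  proof
    fix c assume "c \<in> {c. c < n \<and> \<not> all_empty (C c) \<sigma>}"
    then obtain v where "c < n" "v \<in> C c" "\<sigma> v \<noteq> Empty"
      by (auto simp: all_empty_def)
    then show "c \<in> block ` ?S"
      using block by blast
  qed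
  moreover have "finite ?S"
    using block_familyD(1)[OF assms] by simp
  ultimately have "card {c. c < n \<and> \<not> all_empty (C c) \<sigma>} \<le> card (block ` ?S)"
    by (intro card_mono) auto
  also have "\<dots> \<le> card ?S"
    using \<open>finite ?S\<close> by (rule card_image_le)
  finally show ?thesis
    by (simp add: occupied_count_def)
qed

lemma arm_weight_le_exp:
  fixes p :: real
  assumes A: "proper_arm A" and p: "0 < p" "p < 1"
    and C: "block_family k (arm_corner A)"
  defines "\<gamma> \<equiv> g (real (arm_width A) * - ln (1 - p))"
  shows "arm_weight p A \<sigma>
    \<le> exp (\<gamma> * (1 + 2 * real (occupied_count (arm_corner_region A) \<sigma>) - real (arm_length A)))"
proof -
  have m: "0 < arm_width A"
    using A by (simp add: proper_arm_def)
  have \<beta>: "beta (1 - (1 - p) ^ arm_width A) = exp (- \<gamma>)"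
    unfolding \<gamma>_def by (rule beta_nonempty_block_prob[OF p m])
  have "0 \<le> \<gamma>"
    using beta_le_one[OF nonempty_block_prob_bounds[OF p m]] by (simp add: \<beta>)
  have "arm_length A - 1 \<le> card (corner_gaps A \<sigma>) + 2 * occupied_count (arm_corner_region A) \<sigma>"
    using card_corner_gaps_ge[of A \<sigma>] card_nonempty_blocks_le[OF C, of "arm_length A" \<sigma>]
    unfolding arm_corner_region_def by linarith
  then have "real (arm_length A) - 1
      \<le> real (card (corner_gaps A \<sigma>)) + 2 * real (occupied_count (arm_corner_region A) \<sigma>)"
    by linarith
  then have "\<gamma> * (real (arm_length A) - 1)
      \<le> \<gamma> * (real (card (corner_gaps A \<sigma>)) + 2 * real (occupied_count (arm_corner_region A) \<sigma>))"
    using \<open>0 \<le> \<gamma>\<close> by (rule mult_left_mono)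
  then have "- \<gamma> * real (card (corner_gaps A \<sigma>))
      \<le> \<gamma> * (1 + 2 * real (occupied_count (arm_corner_region A) \<sigma>) - real (arm_length A))"
    by (simp add: algebra_simps)
  then show ?thesis
    by (simp add: arm_weight_def \<beta> exp_of_nat_mult[symmetric] mult.commute)
qed


section \<open>Nested rectangles\<close>

definition column_blocks :: "int \<Rightarrow> int set \<Rightarrow> nat \<Rightarrow> (int \<times> int) set" where
  "column_blocks x0 Y c = {x0 + int c} \<times> Y"

definition row_blocks :: "int set \<Rightarrow> int \<Rightarrow> nat \<Rightarrow> (int \<times> int) set" where
  "row_blocks X y0 c = X \<times> {y0 + int c}"

lemma block_family_column_blocks: "finite Y \<Longrightarrow> block_family (card Y) (column_blocks x0 Y)"
  by (auto simp: block_family_def column_blocks_def card_cartesian_product)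

lemma block_family_row_blocks: "finite X \<Longrightarrow> block_family (card X) (row_blocks X y0)"
  by (auto simp: block_family_def row_blocks_def card_cartesian_product)

lemma UN_column_blocks: "(\<Union>c<n. column_blocks x0 Y c) = {x0..x0 + int n - 1} \<times> Y"
proof
  show "(\<Union>c<n. column_blocks x0 Y c) \<subseteq> {x0..x0 + int n - 1} \<times> Y"
    by (auto simp: column_blocks_def)
  show "{x0..x0 + int n - 1} \<times> Y \<subseteq> (\<Union>c<n. column_blocks x0 Y c)"
  proof clarify
    fix x y assume "x \<in> {x0..x0 + int n - 1}" "y \<in> Y"
    then have "nat (x - x0) < n" "(x, y) \<in> column_blocks x0 Y (nat (x - x0))"
      by (auto simp: column_blocks_def)
    then show "(x, y) \<in> (\<Union>c<n. column_blocks x0 Y c)" by blast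
  qed
qed

lemma UN_row_blocks: "(\<Union>c<n. row_blocks X y0 c) = X \<times> {y0..y0 + int n - 1}"
proof
  show "(\<Union>c<n. row_blocks X y0 c) \<subseteq> X \<times> {y0..y0 + int n - 1}"
    by (auto simp: row_blocks_def)
  show "X \<times> {y0..y0 + int n - 1} \<subseteq> (\<Union>c<n. row_blocks X y0 c)"
  proof clarify
    fix x y assume "y \<in> {y0..y0 + int n - 1}" "x \<in> X"
    then have "nat (y - y0) < n" "(x, y) \<in> row_blocks X y0 (nat (y - y0))"
      by (auto simp: row_blocks_def)
    then show "(x, y) \<in> (\<Union>c<n. row_blocks X y0 c)" by blast
  qed
qed

lemma arm_event_columnsI:
  assumes "\<not> double_gap_cols \<sigma> x0 (x0 + int n - 1) y0 y1" "{y0..y1} \<subseteq> Y \<union> Y'"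
  shows "arm_event (Arm m (column_blocks x0 Y) (column_blocks x0 Y') n) \<sigma>"
  unfolding arm_event_def no_double_gap_at_def arm.sel
proof (intro ballI impI notI)
  fix c
  assume c: "c \<in> corner_gaps (Arm m (column_blocks x0 Y) (column_blocks x0 Y') n) \<sigma>"
    and "Suc c < n" and empty: "all_empty (column_blocks x0 Y c) \<sigma> \<and> all_empty (column_blocks x0 Y (Suc c)) \<sigma>"
  have "double_gap_cols \<sigma> x0 (x0 + int n - 1) y0 y1"
    unfolding double_gap_cols_def
  proof (intro exI conjI ballI)
    show "x0 \<le> x0 + int c" "x0 + int c + 1 \<le> x0 + int n - 1"
      using \<open>Suc c < n\<close> by simp_all
    fix y assume "y \<in> {y0..y1}"
    then have "y \<in> Y \<or> y \<in> Y'" using assms(2) by auto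
    then show "\<sigma> (x0 + int c, y) = Empty" "\<sigma> (x0 + int c + 1, y) = Empty"
      using c empty by (auto simp: corner_gaps_def all_empty_def column_blocks_def ac_simps)
  qed
  then show False using assms(1) by simp
qed

lemma arm_event_rowsI:
  assumes "\<not> double_gap_rows \<sigma> x0 x1 y0 (y0 + int n - 1)" "{x0..x1} \<subseteq> X \<union> X'"
  shows "arm_event (Arm m (row_blocks X y0) (row_blocks X' y0) n) \<sigma>"
  unfolding arm_event_def no_double_gap_at_def arm.sel
proof (intro ballI impI notI)
  fix c
  assume c: "c \<in> corner_gaps (Arm m (row_blocks X y0) (row_blocks X' y0) n) \<sigma>"
    and "Suc c < n" and empty: "all_empty (row_blocks X y0 c) \<sigma> \<and> all_empty (row_blocks X y0 (Suc c)) \<sigma>"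
  have "double_gap_rows \<sigma> x0 x1 y0 (y0 + int n - 1)"
    unfolding double_gap_rows_def
  proof (intro exI conjI ballI)
    show "y0 \<le> y0 + int c" "y0 + int c + 1 \<le> y0 + int n - 1"
      using \<open>Suc c < n\<close> by simp_all
    fix x assume "x \<in> {x0..x1}"
    then have "x \<in> X \<or> x \<in> X'" using assms(2) by auto
    then show "\<sigma> (x, y0 + int c) = Empty" "\<sigma> (x, y0 + int c + 1) = Empty"
      using c empty by (auto simp: corner_gaps_def all_empty_def row_blocks_def ac_simps)
  qed
  then show False using assms(1) by simp
qed


lemma determined_by_double_gap_cols: "determined_by ({a..c} \<times> {b..d}) (\<lambda>\<sigma>. double_gap_cols \<sigma> a c b d)"
  unfolding determined_by_def double_gap_cols_def by (auto 0 4)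

lemma determined_by_double_gap_rows: "determined_by ({a..c} \<times> {b..d}) (\<lambda>\<sigma>. double_gap_rows \<sigma> a c b d)"
  unfolding determined_by_def double_gap_rows_def by (auto 0 4)

lemma determined_by_D_event:
  "determined_by ({X1..x1 - 1} \<times> {Y1..Y2} \<union> {x2 + 1..X2} \<times> {Y1..Y2}
      \<union> {X1..X2} \<times> {Y1..y1 - 1} \<union> {X1..X2} \<times> {y2 + 1..Y2})
    (D_event x1 x2 y1 y2 X1 X2 Y1 Y2)"
  unfolding determined_by_def
proof (intro allI impI)
  fix \<sigma> \<sigma>' :: config
  assume eq: "\<forall>v\<in>{X1..x1 - 1} \<times> {Y1..Y2} \<union> {x2 + 1..X2} \<times> {Y1..Y2}
      \<union> {X1..X2} \<times> {Y1..y1 - 1} \<union> {X1..X2} \<times> {y2 + 1..Y2}. \<sigma> v = \<sigma>' v"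
  have "double_gap_cols \<sigma> X1 (x1 - 1) Y1 Y2 = double_gap_cols \<sigma>' X1 (x1 - 1) Y1 Y2"
    "double_gap_cols \<sigma> (x2 + 1) X2 Y1 Y2 = double_gap_cols \<sigma>' (x2 + 1) X2 Y1 Y2"
    by (rule determined_byD[OF determined_by_double_gap_cols], use eq in blast)+
  moreover have "double_gap_rows \<sigma> X1 X2 Y1 (y1 - 1) = double_gap_rows \<sigma>' X1 X2 Y1 (y1 - 1)"
    "double_gap_rows \<sigma> X1 X2 (y2 + 1) Y2 = double_gap_rows \<sigma>' X1 X2 (y2 + 1) Y2"
    by (rule determined_byD[OF determined_by_double_gap_rows], use eq in blast)+
  ultimately show "D_event x1 x2 y1 y2 X1 X2 Y1 Y2 \<sigma> = D_event x1 x2 y1 y2 X1 X2 Y1 Y2 \<sigma>'"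
    by (simp add: D_event_def)
qed

locale nested_rectangles =
  fixes x1 x2 y1 y2 X1 X2 Y1 Y2 :: int
  assumes ordered: "X1 \<le> x1" "x1 \<le> x2" "x2 \<le> X2" "Y1 \<le> y1" "y1 \<le> y2" "y2 \<le> Y2"
begin

definition side_columns :: "int set" where
  "side_columns = {X1..x1 - 1} \<union> {x2 + 1..X2}"

definition side_rows :: "int set" where
  "side_rows = {Y1..y1 - 1} \<union> {y2 + 1..Y2}"

definition corners :: "(int \<times> int) set" where
  "corners = side_columns \<times> side_rows"

definition left_arm :: arm where
  "left_arm = Arm (nat (y2 - y1 + 1)) (column_blocks X1 {y1..y2}) (column_blocks X1 side_rows)
     (nat (x1 - X1))"

definition right_arm :: arm where
  "right_arm = Arm (nat (y2 - y1 + 1)) (column_blocks (x2 + 1) {y1..y2})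
     (column_blocks (x2 + 1) side_rows) (nat (X2 - x2))"

definition bottom_arm :: arm where
  "bottom_arm = Arm (nat (x2 - x1 + 1)) (row_blocks {x1..x2} Y1) (row_blocks side_columns Y1)
     (nat (y1 - Y1))"

definition top_arm :: arm where
  "top_arm = Arm (nat (x2 - x1 + 1)) (row_blocks {x1..x2} (y2 + 1))
     (row_blocks side_columns (y2 + 1)) (nat (Y2 - y2))"

definition arms :: "arm list" where
  "arms = [left_arm, right_arm, bottom_arm, top_arm]"

lemma arm_regions:
  "arm_region left_arm = {X1..x1 - 1} \<times> {y1..y2}"
  "arm_region right_arm = {x2 + 1..X2} \<times> {y1..y2}"
  "arm_region bottom_arm = {x1..x2} \<times> {Y1..y1 - 1}"
  "arm_region top_arm = {x1..x2} \<times> {y2 + 1..Y2}"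
  "arm_corner_region left_arm = {X1..x1 - 1} \<times> side_rows"
  "arm_corner_region right_arm = {x2 + 1..X2} \<times> side_rows"
  "arm_corner_region bottom_arm = side_columns \<times> {Y1..y1 - 1}"
  "arm_corner_region top_arm = side_columns \<times> {y2 + 1..Y2}"
  using ordered
  by (simp_all add: arm_region_def arm_corner_region_def left_arm_def right_arm_def bottom_arm_def
      top_arm_def UN_column_blocks UN_row_blocks)

lemma corner_families:
  "block_family (card side_rows) (arm_corner left_arm)"
  "block_family (card side_rows) (arm_corner right_arm)"
  "block_family (card side_columns) (arm_corner bottom_arm)"
  "block_family (card side_columns) (arm_corner top_arm)"
  by (simp_all add: left_arm_def right_arm_def bottom_arm_def top_arm_def side_rows_def
      side_columns_def block_family_column_blocks block_family_row_blocks)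

lemma arms_fit_corners:
  assumes "A \<in> set arms"
  shows "proper_arm A" "corners \<inter> arm_region A = {}" "arm_corner_region A \<subseteq> corners"
proof -
  have "proper_arm left_arm" "proper_arm right_arm" "proper_arm bottom_arm" "proper_arm top_arm"
    using ordered block_family_column_blocks[of "{y1..y2}"] block_family_row_blocks[of "{x1..x2}"]
    by (simp_all add: proper_arm_def left_arm_def right_arm_def bottom_arm_def top_arm_def)
  then show "proper_arm A"
    using assms by (auto simp: arms_def)
  show "corners \<inter> arm_region A = {}" "arm_corner_region A \<subseteq> corners"
    using assms ordered
    by (auto simp: arms_def arm_regions corners_def side_columns_def side_rows_def)
qed

lemma arm_regions_disjoint: "sorted_wrt (\<lambda>A B. arm_region A \<inter> arm_region B = {}) arms"
  using ordered by (auto simp: arms_def arm_regions)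

lemma D_event_imp_arm_event:
  assumes "D_event x1 x2 y1 y2 X1 X2 Y1 Y2 \<sigma>" "A \<in> set arms"
  shows "arm_event A \<sigma>"
proof -
  have Y: "{Y1..Y2} \<subseteq> {y1..y2} \<union> side_rows" and X: "{X1..X2} \<subseteq> {x1..x2} \<union> side_columns"
    by (auto simp: side_rows_def side_columns_def)
  have "X1 + int (nat (x1 - X1)) - 1 = x1 - 1" "x2 + 1 + int (nat (X2 - x2)) - 1 = X2"
    "Y1 + int (nat (y1 - Y1)) - 1 = y1 - 1" "y2 + 1 + int (nat (Y2 - y2)) - 1 = Y2"
    using ordered by simp_all
  then have "arm_event left_arm \<sigma>" "arm_event right_arm \<sigma>"
    "arm_event bottom_arm \<sigma>" "arm_event top_arm \<sigma>"
    using assms(1) unfolding D_event_def left_arm_def right_arm_def bottom_arm_def top_arm_def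
    by (auto intro: arm_event_columnsI[OF _ Y] arm_event_rowsI[OF _ X])
  then show ?thesis
    using assms(2) by (auto simp: arms_def)
qed

lemma determined_by_D_event_arms:
  "determined_by (corners \<union> (\<Union>A\<in>set arms. arm_region A)) (D_event x1 x2 y1 y2 X1 X2 Y1 Y2)"
  by (rule determined_by_subset[OF determined_by_D_event])
    (use ordered in \<open>auto simp: arms_def arm_regions corners_def side_columns_def side_rows_def\<close>)

lemma occupied_count_corners:
  "occupied_count corners \<sigma>
     = occupied_count (arm_corner_region left_arm) \<sigma> + occupied_count (arm_corner_region right_arm) \<sigma>"
  "occupied_count corners \<sigma>
     = occupied_count (arm_corner_region bottom_arm) \<sigma> + occupied_count (arm_corner_region top_arm) \<sigma>"
proof -
  have fin: "finite (arm_corner_region A)" if "A \<in> set arms" for A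
    using that by (auto simp: arms_def arm_regions side_columns_def side_rows_def)
  have "corners = arm_corner_region left_arm \<union> arm_corner_region right_arm"
    by (auto simp: arm_regions corners_def side_columns_def)
  moreover have "arm_corner_region left_arm \<inter> arm_corner_region right_arm = {}"
    using ordered by (auto simp: arm_regions)
  ultimately show "occupied_count corners \<sigma>
     = occupied_count (arm_corner_region left_arm) \<sigma> + occupied_count (arm_corner_region right_arm) \<sigma>"
    using fin by (simp add: occupied_count_Un arms_def)
  have "corners = arm_corner_region bottom_arm \<union> arm_corner_region top_arm"
    by (auto simp: arm_regions corners_def side_rows_def)
  moreover have "arm_corner_region bottom_arm \<inter> arm_corner_region top_arm = {}"
    using ordered by (auto simp: arm_regions)
  ultimately show "occupied_count corners \<sigma>
     = occupied_count (arm_corner_region bottom_arm) \<sigma> + occupied_count (arm_corner_region top_arm) \<sigma>"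
    using fin by (simp add: occupied_count_Un arms_def)
qed

lemma prod_arm_weights_le:
  fixes p :: real
  assumes p: "0 < p" "p < 1"
  defines "\<gamma>a \<equiv> g (real_of_int (x2 - x1 + 1) * - ln (1 - p))"
    and "\<gamma>b \<equiv> g (real_of_int (y2 - y1 + 1) * - ln (1 - p))"
  shows "(\<Prod>A\<leftarrow>arms. arm_weight p A \<sigma>)
    \<le> exp (- real_of_int ((X2 - X1) - (x2 - x1)) * \<gamma>b - real_of_int ((Y2 - Y1) - (y2 - y1)) * \<gamma>a
          + 2 * (\<gamma>b + \<gamma>a)) * exp (2 * (\<gamma>b + \<gamma>a)) ^ occupied_count corners \<sigma>"
proof -
  let ?Z = "\<lambda>A. real (occupied_count (arm_corner_region A) \<sigma>)"
  let ?e = "\<lambda>\<gamma> A. exp (\<gamma> * (1 + 2 * ?Z A - real (arm_length A)))"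
  have bound: "arm_weight p A \<sigma> \<le> ?e \<gamma> A"
    if "A \<in> set arms" "block_family k (arm_corner A)" "\<gamma> = g (real (arm_width A) * - ln (1 - p))"
    for A k \<gamma>
    using arm_weight_le_exp[OF arms_fit_corners(1)[OF that(1)] p that(2)] that(3) by simp
  have "\<gamma>b = g (real (arm_width left_arm) * - ln (1 - p))"
    "\<gamma>b = g (real (arm_width right_arm) * - ln (1 - p))"
    "\<gamma>a = g (real (arm_width bottom_arm) * - ln (1 - p))"
    "\<gamma>a = g (real (arm_width top_arm) * - ln (1 - p))"
    using ordered by (simp_all add: \<gamma>a_def \<gamma>b_def left_arm_def right_arm_def bottom_arm_def top_arm_def)
  then have "arm_weight p left_arm \<sigma> \<le> ?e \<gamma>b left_arm" "arm_weight p right_arm \<sigma> \<le> ?e \<gamma>b right_arm"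
    "arm_weight p bottom_arm \<sigma> \<le> ?e \<gamma>a bottom_arm" "arm_weight p top_arm \<sigma> \<le> ?e \<gamma>a top_arm"
    using bound[OF _ corner_families(1)] bound[OF _ corner_families(2)]
      bound[OF _ corner_families(3)] bound[OF _ corner_families(4)]
    by (simp_all add: arms_def)
  then have "(\<Prod>A\<leftarrow>arms. arm_weight p A \<sigma>)
      \<le> ?e \<gamma>b left_arm * (?e \<gamma>b right_arm * (?e \<gamma>a bottom_arm * ?e \<gamma>a top_arm))"
    unfolding arms_def using arm_weight_nonneg[OF arms_fit_corners(1) p]
    by (simp add: arms_def mult_mono')
  also have "\<dots> = exp (\<gamma>b * (2 + 2 * (?Z left_arm + ?Z right_arm)
        - (real (arm_length left_arm) + real (arm_length right_arm)))
      + \<gamma>a * (2 + 2 * (?Z bottom_arm + ?Z top_arm)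
        - (real (arm_length bottom_arm) + real (arm_length top_arm))))"
    by (simp add: exp_add[symmetric] algebra_simps)
  also have "\<dots> = exp (\<gamma>b * (2 + 2 * real (occupied_count corners \<sigma>) - real_of_int ((X2 - X1) - (x2 - x1)))
      + \<gamma>a * (2 + 2 * real (occupied_count corners \<sigma>) - real_of_int ((Y2 - Y1) - (y2 - y1))))"
  proof -
    have "?Z left_arm + ?Z right_arm = real (occupied_count corners \<sigma>)"
      by (simp only: occupied_count_corners(1) of_nat_add)
    moreover have "?Z bottom_arm + ?Z top_arm = real (occupied_count corners \<sigma>)"
      by (simp only: occupied_count_corners(2) of_nat_add)
    moreover have "real (arm_length left_arm) + real (arm_length right_arm)
        = real_of_int ((X2 - X1) - (x2 - x1))"
      "real (arm_length bottom_arm) + real (arm_length top_arm) = real_of_int ((Y2 - Y1) - (y2 - y1))"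
      using ordered by (simp_all add: left_arm_def right_arm_def bottom_arm_def top_arm_def)
    ultimately show ?thesis
      by (simp only:)
  qed
  finally show ?thesis
    by (simp add: exp_of_nat_mult[symmetric] exp_add[symmetric] algebra_simps)
qed

lemma finite_corners: "finite corners"
  by (simp add: corners_def side_columns_def side_rows_def)

lemma card_corners:
  "real (card corners) = real_of_int ((X2 - X1) - (x2 - x1)) * real_of_int ((Y2 - Y1) - (y2 - y1))"
proof -
  have "card side_columns = nat (x1 - X1) + nat (X2 - x2)" "card side_rows = nat (y1 - Y1) + nat (Y2 - y2)"
    using ordered by (simp_all add: side_columns_def side_rows_def card_Un_disjoint)
  then show ?thesis
    using ordered by (simp add: corners_def card_cartesian_product algebra_simps)
qed

lemma emeasure_D_event_le:
  assumes p: "0 < p" "p < 1"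
  shows "emeasure (P p) {\<sigma> \<in> space (P p). D_event x1 x2 y1 y2 X1 X2 Y1 Y2 \<sigma>}
    \<le> (\<integral>\<^sup>+w. ennreal (\<Prod>A\<leftarrow>arms. arm_weight p A w) \<partial>PiM corners (site_law p))"
proof -
  let ?J = "corners \<union> (\<Union>A\<in>set arms. arm_region A)"
  let ?M = "PiM ?J (site_law p)"
  have J: "finite ?J"
    using finite_corners finite_arm_region arms_fit_corners(1) by auto
  have "emeasure (P p) {\<sigma> \<in> space (P p). D_event x1 x2 y1 y2 X1 X2 Y1 Y2 \<sigma>}
      = (\<integral>\<^sup>+\<sigma>. indicator {\<sigma> \<in> space ?M. D_event x1 x2 y1 y2 X1 X2 Y1 Y2 \<sigma>} \<sigma> \<partial>?M)"
    using J by (simp add: emeasure_P_eq_PiM[OF J determined_by_D_event_arms] sets_PiM_site_law)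
  also have "\<dots> \<le> (\<integral>\<^sup>+\<sigma>. ennreal (1 * (\<Prod>A\<leftarrow>arms. of_bool (arm_event A \<sigma>))) \<partial>?M)"
  proof (rule nn_integral_mono)
    fix \<sigma>
    have "(\<Prod>A\<leftarrow>arms. of_bool (arm_event A \<sigma>) :: real) = 1" if "D_event x1 x2 y1 y2 X1 X2 Y1 Y2 \<sigma>"
      using D_event_imp_arm_event[OF that] by (simp add: arms_def)
    then show "indicator {\<sigma> \<in> space ?M. D_event x1 x2 y1 y2 X1 X2 Y1 Y2 \<sigma>} \<sigma>
        \<le> ennreal (1 * (\<Prod>A\<leftarrow>arms. of_bool (arm_event A \<sigma>)))"
      by (simp add: indicator_def)
  qed
  also have "\<dots> \<le> (\<integral>\<^sup>+w. ennreal (1 * (\<Prod>A\<leftarrow>arms. arm_weight p A w)) \<partial>PiM corners (site_law p))"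
    using arms_fit_corners arm_regions_disjoint
    by (intro nn_integral_arms_le[OF p finite_corners]) (auto simp: determined_by_def)
  finally show ?thesis
    by simp
qed

lemma nn_integral_arm_weights_le:
  fixes p :: real
  assumes p: "0 < p" "p < 1"
  defines "\<gamma>a \<equiv> g (real_of_int (x2 - x1 + 1) * - ln (1 - p))"
    and "\<gamma>b \<equiv> g (real_of_int (y2 - y1 + 1) * - ln (1 - p))"
  shows "(\<integral>\<^sup>+w. ennreal (\<Prod>A\<leftarrow>arms. arm_weight p A w) \<partial>PiM corners (site_law p))
    \<le> ennreal (exp (- real_of_int ((X2 - X1) - (x2 - x1)) * \<gamma>b - real_of_int ((Y2 - Y1) - (y2 - y1)) * \<gamma>a
          + 2 * (\<gamma>b + \<gamma>a) + real (card corners) * - ln (1 - p) * exp (2 * (\<gamma>b + \<gamma>a))))"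
proof -
  define E where "E = exp (- real_of_int ((X2 - X1) - (x2 - x1)) * \<gamma>b
    - real_of_int ((Y2 - Y1) - (y2 - y1)) * \<gamma>a + 2 * (\<gamma>b + \<gamma>a))"
  define c where "c = exp (2 * (\<gamma>b + \<gamma>a))"
  have "(\<integral>\<^sup>+w. ennreal (\<Prod>A\<leftarrow>arms. arm_weight p A w) \<partial>PiM corners (site_law p))
      \<le> (\<integral>\<^sup>+w. ennreal E * ennreal (c ^ occupied_count corners w) \<partial>PiM corners (site_law p))"
    using prod_arm_weights_le[OF p]
    by (intro nn_integral_mono) (simp add: E_def c_def \<gamma>a_def \<gamma>b_def ennreal_mult'[symmetric] ennreal_leI)
  also have "\<dots> = ennreal E * ennreal ((1 - p + p * c) ^ card corners)"
    using p finite_corners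
    by (simp add: nn_integral_cmult borel_measurable_PiM_site_law nn_integral_power_occupied_count c_def)
  also have "\<dots> \<le> ennreal E * ennreal (exp (real (card corners) * - ln (1 - p) * c))"
    using binomial_moment_le_exp[OF p, of c] by (intro mult_left_mono ennreal_leI) (simp_all add: c_def)
  finally show ?thesis
    by (simp add: E_def c_def ennreal_mult'[symmetric] exp_add[symmetric])
qed

lemma measure_D_event_le:
  fixes p :: real
  assumes p: "0 < p" "p < 1"
  defines "q \<equiv> - ln (1 - p)"
    and "a \<equiv> x2 - x1 + 1" and "b \<equiv> y2 - y1 + 1"
    and "s \<equiv> (X2 - X1) - (x2 - x1)" and "t \<equiv> (Y2 - Y1) - (y2 - y1)"
  shows "measure (P p) {\<sigma> \<in> space (P p). D_event x1 x2 y1 y2 X1 X2 Y1 Y2 \<sigma>}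
    \<le> exp (- real_of_int s * g (real_of_int b * q) - real_of_int t * g (real_of_int a * q)
           + 2 * (g (real_of_int b * q) + g (real_of_int a * q))
           + real_of_int s * real_of_int t * q * exp (2 * (g (real_of_int b * q) + g (real_of_int a * q))))"
proof -
  interpret prob_space "P p"
    unfolding P_def by (rule prob_space_PiM_site_law)
  have "emeasure (P p) {\<sigma> \<in> space (P p). D_event x1 x2 y1 y2 X1 X2 Y1 Y2 \<sigma>}
    \<le> exp (- real_of_int s * g (real_of_int b * q) - real_of_int t * g (real_of_int a * q)
           + 2 * (g (real_of_int b * q) + g (real_of_int a * q))
           + real_of_int s * real_of_int t * q * exp (2 * (g (real_of_int b * q) + g (real_of_int a * q))))"
    using order_trans[OF emeasure_D_event_le[OF p] nn_integral_arm_weights_le[OF p]]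
    by (simp only: card_corners q_def a_def b_def s_def t_def mult.assoc)
  then show ?thesis
    by (simp add: emeasure_eq_measure)
qed

end

theorem lemma6:
  fixes p :: real and x1 x2 y1 y2 X1 X2 Y1 Y2 :: int
  assumes "0 < p" "p < 1"
    and "X1 \<le> x1" "x1 \<le> x2" "x2 \<le> X2"
    and "Y1 \<le> y1" "y1 \<le> y2" "y2 \<le> Y2"
  defines "q \<equiv> - ln (1 - p)"
    and "a \<equiv> x2 - x1 + 1" and "b \<equiv> y2 - y1 + 1"
    and "s \<equiv> (X2 - X1) - (x2 - x1)" and "t \<equiv> (Y2 - Y1) - (y2 - y1)"
  shows "measure (P p) {\<sigma> \<in> space (P p). D_event x1 x2 y1 y2 X1 X2 Y1 Y2 \<sigma>}
    \<le> exp (- real_of_int s * g (real_of_int b * q) - real_of_int t * g (real_of_int a * q)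
           + 2 * (g (real_of_int b * q) + g (real_of_int a * q))
           + real_of_int s * real_of_int t * q * exp (2 * (g (real_of_int b * q) + g (real_of_int a * q))))"
proof -
  interpret nested_rectangles x1 x2 y1 y2 X1 X2 Y1 Y2
    using assms(3-8) by unfold_locales
  show ?thesis
    unfolding q_def a_def b_def s_def t_def by (rule measure_D_event_le[OF assms(1,2)])
qed

end
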